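(* In every polyhedral model $\mathcal{X}=\langle P,K,V\rangle$, the largest simplicial bisimulation on $P$ exists and coincides with logical equivalence $\equiv$.
   Context: A $d$-simplex $\sigma\subseteq\mathbb{R}^m$ is the convex hull of $d+1$ affinely independent points $v_0,\dots,v_d$ (its vertices); the simplexes spanned by subsets of the vertices (including the empty simplex) are its faces, and $\tau\preceq\sigma$ means $\tau$ is a face of $\sigma$. The relative interior of $\sigma$ is $\tilde\sigma=\{\sum_i\lambda_iv_i:\lambda_i\in(0,1],\sum_i\lambda_i=1\}$. A simplicial complex $K$ is a finite set of simplexes of $\mathbb{R}^m$ closed under taking faces and such that the intersection of any two of its simplexes is a face of both. Its polyhedron is $|K|=\bigcup K$, with the subspace topology of $\mathbb{R}^m$; $\mathcal{C}$ and $\mathcal{I}$ denote closure and interior in this space. The cells of $K$ are the sets $\tilde\sigma$ for nonempty $\sigma\in K$; they form a partition $\tilde K$ of $|K|$. A path in a space $P$ is a continuous $\pi:[0,1]\to P$; $\pi(S)=\{\pi(s):s\in S\}$. Fix a finite set $AP$ of atomic propositions. A polyhedral model is $\mathcal{X}=\langle P,K,V\rangle$ with $K$ a simplicial complex, $P=|K|$, and $V:AP\to\mathcal{P}(P)$ such that each $V(p)$ is a union of cells of $K$ ($K$ is then called coherent with the model). SLCS formulas: $\phi::=\top\mid p\mid\neg\phi\mid\phi\wedge\phi\mid\Box\phi\mid\gamma(\phi,\phi)$, $p\in AP$. Semantics at $x\in P$, with $[\![\phi]\!]=\{x\in P:\mathcal{X},x\models\phi\}$: $\top$ always holds; $x\models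 p$ iff $x\in V(p)$; Boolean connectives as usual; $x\models\Box\phi$ iff $x\in\mathcal{I}([\![\phi]\!])$; $x\models\gamma(\phi,\psi)$ iff there is a path $\pi$ in $P$ with $\pi(0)=x$, $\pi((0,1))\subseteq[\![\phi]\!]$ and $\pi(1)\in[\![\psi]\!]$. Logical equivalence $\equiv$ on $P$: $x\equiv y$ iff $x$ and $y$ satisfy exactly the same SLCS formulas. A path $\pi$ is simplicial (w.r.t. $K$) if there are $s_0=0<s_1<\dots<s_k=1$ and cells $\tilde\sigma_1,\dots,\tilde\sigma_k$ of $K$ with $\pi((s_{i-1},s_i))\subseteq\tilde\sigma_i$ for all $i$. For $R\subseteq P\times P$, paths satisfy $\pi_1\hat R\pi_2$ iff $\pi_1(t)\,R\,\pi_2(t)$ for all $t\in[0,1]$. A relation $\sim\subseteq P\times P$ is a simplicial bisimulation if whenever $x\sim y$: (1) for all $p\in AP$, $x\in V(p)\iff y\in V(p)$; (2) for every simplicial path $\pi_x$ with $\pi_x(0)=x$ there is a simplicial path $\pi_y$ with $\pi_y(0)=y$ and $\pi_x\hat\sim\pi_y$; (3) for every simplicial path $\pi_y$ with $\pi_y(0)=y$ there is a simplicial path $\pi_x$ with $\pi_x(0)=x$ and $\pi_x\hat\sim\pi_y$. *)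

theory Defs
  imports "HOL-Analysis.Analysis"
begin

text \<open>Ambient space R^m: an arbitrary Euclidean space 'a. Atomic propositions: a finite type 'p.\<close>

definition is_simplex :: "'a::euclidean_space set \<Rightarrow> bool" where
  "is_simplex \<sigma> \<longleftrightarrow> (\<exists>S. finite S \<and> \<not> affine_dependent S \<and> \<sigma> = convex hull S)"

definition is_face :: "'a::euclidean_space set \<Rightarrow> 'a set \<Rightarrow> bool" where
  "is_face \<tau> \<sigma> \<longleftrightarrow> (\<exists>S T. finite S \<and> \<not> affine_dependent S \<and> \<sigma> = convex hull S
       \<and> T \<subseteq> S \<and> \<tau> = convex hull T)"

definition simplex_relint :: "'a::euclidean_space set \<Rightarrow> 'a set" where
  "simplex_relint \<sigma> = {x. \<exists>S l. finite S \<and> \<not> affine_dependent S \<and> \<sigma> = convex hull S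
       \<and> (\<forall>v\<in>S. 0 < l v \<and> l v \<le> 1) \<and> sum l S = 1 \<and> x = (\<Sum>v\<in>S. l v *\<^sub>R v)}"

definition simplicial_complex :: "'a::euclidean_space set set \<Rightarrow> bool" where
  "simplicial_complex K \<longleftrightarrow> finite K \<and> (\<forall>\<sigma>\<in>K. is_simplex \<sigma>)
     \<and> (\<forall>\<sigma>\<in>K. \<forall>\<tau>. is_face \<tau> \<sigma> \<longrightarrow> \<tau> \<in> K)
     \<and> (\<forall>\<sigma>\<in>K. \<forall>\<tau>\<in>K. is_face (\<sigma> \<inter> \<tau>) \<sigma> \<and> is_face (\<sigma> \<inter> \<tau>) \<tau>)"

definition polyhedron :: "'a::euclidean_space set set \<Rightarrow> 'a set" where
  "polyhedron K = \<Union>K"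

definition cells :: "'a::euclidean_space set set \<Rightarrow> 'a set set" where
  "cells K = {simplex_relint \<sigma> | \<sigma>. \<sigma> \<in> K \<and> \<sigma> \<noteq> {}}"

definition polyhedral_model :: "'a::euclidean_space set set \<Rightarrow> ('p::finite \<Rightarrow> 'a set) \<Rightarrow> bool" where
  "polyhedral_model K V \<longleftrightarrow> simplicial_complex K
     \<and> (\<forall>p. \<exists>C. C \<subseteq> cells K \<and> V p = \<Union>C)"

datatype 'p fml = FTop | FAtom 'p | FNeg "'p fml" | FAnd "'p fml" "'p fml"
  | FBox "'p fml" | FGamma "'p fml" "'p fml"

definition path_in :: "'a::euclidean_space set \<Rightarrow> (real \<Rightarrow> 'a) \<Rightarrow> bool" where
  "path_in P \<pi> \<longleftrightarrow> path \<pi> \<and> path_image \<pi> \<subseteq> P"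

fun sem :: "'a::euclidean_space set set \<Rightarrow> ('p \<Rightarrow> 'a set) \<Rightarrow> 'p fml \<Rightarrow> 'a set" where
  "sem K V FTop = polyhedron K"
| "sem K V (FAtom p) = polyhedron K \<inter> V p"
| "sem K V (FNeg \<phi>) = polyhedron K - sem K V \<phi>"
| "sem K V (FAnd \<phi> \<psi>) = sem K V \<phi> \<inter> sem K V \<psi>"
| "sem K V (FBox \<phi>) = (top_of_set (polyhedron K)) interior_of (sem K V \<phi>)"
| "sem K V (FGamma \<phi> \<psi>) = {x \<in> polyhedron K. \<exists>\<pi>. path_in (polyhedron K) \<pi> \<and> \<pi> 0 = x
       \<and> \<pi> ` {0<..<1} \<subseteq> sem K V \<phi> \<and> \<pi> 1 \<in> sem K V \<psi>}"

definition logeq :: "'a::euclidean_space set set \<Rightarrow> ('p \<Rightarrow> 'a set) \<Rightarrow> ('a \<times> 'a) set" where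
  "logeq K V = {(x, y). x \<in> polyhedron K \<and> y \<in> polyhedron K
      \<and> (\<forall>\<phi>. x \<in> sem K V \<phi> \<longleftrightarrow> y \<in> sem K V \<phi>)}"

definition simplicial_path :: "'a::euclidean_space set set \<Rightarrow> (real \<Rightarrow> 'a) \<Rightarrow> bool" where
  "simplicial_path K \<pi> \<longleftrightarrow> path_in (polyhedron K) \<pi> \<and>
     (\<exists>k::nat. \<exists>s::nat \<Rightarrow> real. \<exists>c::nat \<Rightarrow> 'a set. k \<ge> 1 \<and> s 0 = 0 \<and> s k = 1
        \<and> (\<forall>i<k. s i < s (Suc i))
        \<and> (\<forall>i\<in>{1..k}. c i \<in> cells K \<and> \<pi> ` {s (i - 1)<..<s i} \<subseteq> c i))"

definition path_rel :: "('a \<times> 'a) set \<Rightarrow> (real \<Rightarrow> 'a) \<Rightarrow> (real \<Rightarrow> 'a) \<Rightarrow> bool" where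
  "path_rel R \<pi>1 \<pi>2 \<longleftrightarrow> (\<forall>t\<in>{0..1}. (\<pi>1 t, \<pi>2 t) \<in> R)"

definition simplicial_bisim :: "'a::euclidean_space set set \<Rightarrow> ('p \<Rightarrow> 'a set) \<Rightarrow> ('a \<times> 'a) set \<Rightarrow> bool" where
  "simplicial_bisim K V R \<longleftrightarrow> R \<subseteq> polyhedron K \<times> polyhedron K \<and>
     (\<forall>(x, y)\<in>R.
        (\<forall>p. x \<in> V p \<longleftrightarrow> y \<in> V p)
      \<and> (\<forall>\<pi>x. simplicial_path K \<pi>x \<and> \<pi>x 0 = x \<longrightarrow>
            (\<exists>\<pi>y. simplicial_path K \<pi>y \<and> \<pi>y 0 = y \<and> path_rel R \<pi>x \<pi>y))
      \<and> (\<forall>\<pi>y. simplicial_path K \<pi>y \<and> \<pi>y 0 = y \<longrightarrow>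
            (\<exists>\<pi>x. simplicial_path K \<pi>x \<and> \<pi>x 0 = x \<and> path_rel R \<pi>x \<pi>y)))"

end

theory Submission
  imports Defs
begin

(* Every formula denotes a union of cells, and since cells are relatively open simplices, a path
   whose interior stays in such a union can be replaced by a simplicial path with the same ends
   and the same property. Hence simplicially bisimilar points satisfy the same formulas: for Box, a
   segment from y into a neighbouring cell outside the set must be matched by a path from x, which
   starts inside the open set; for Gamma, the witnessing path is first made simplicial and then
   matched. Conversely, there are finitely many cells, so every class of logical equivalence is
   defined by a single formula. A simplicial path from x is then matched from any y equivalent to x
   one cell at a time: the piece inside a cell satisfies Gamma of the characteristic formulas of the
   class of that cell and of the class of its endpoint, and so does some simplicial path from y. *)

section \<open>Paths\<close>

lemma path_in_mem: "path_in P g \<Longrightarrow> t \<in> {0..1} \<Longrightarrow> g t \<in> P"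
  unfolding path_in_def path_image_def by blast

lemma subpath_image_open_interval:
  fixes u v :: real
  assumes "u < v"
  shows "subpath u v g ` {0<..<1} = g ` {u<..<v}"
proof -
  have affine: "(\<lambda>t. (v - u) * t + u) ` {0<..<1} = {u<..<v}"
  proof
    show "(\<lambda>t. (v - u) * t + u) ` {0<..<1} \<subseteq> {u<..<v}"
    proof
      fix x assume "x \<in> (\<lambda>t. (v - u) * t + u) ` {0<..<1}"
      then obtain t where t: "0 < t" "t < 1" "x = (v - u) * t + u"
        by auto
      have "0 < (v - u) * t" "(v - u) * t < (v - u) * 1"
        using assms t by (simp_all add: mult_strict_left_mono)
      then show "x \<in> {u<..<v}"
        using t(3) by simp
    qed
    show "{u<..<v} \<subseteq> (\<lambda>t. (v - u) * t + u) ` {0<..<1}"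
    proof
      fix x assume x: "x \<in> {u<..<v}"
      then have "x = (v - u) * ((x - u) / (v - u)) + u" "(x - u) / (v - u) \<in> {0<..<1}"
        using assms by (auto simp: divide_simps)
      then show "x \<in> (\<lambda>t. (v - u) * t + u) ` {0<..<1}"
        using rev_image_eqI by blast
    qed
  qed
  have "subpath u v g ` {0<..<1} = g ` ((\<lambda>t. (v - u) * t + u) ` {0<..<1})"
    by (simp only: subpath_def image_image)
  then show ?thesis
    by (simp only: affine)
qed

lemma path_in_subpath:
  assumes "path_in P g" "u \<in> {0..1}" "v \<in> {0..1}"
  shows "path_in P (subpath u v g)"
  using assms path_image_subpath_subset[of u v g] unfolding path_in_def by auto

lemma path_in_eventually_openin:
  assumes g: "path_in P g" and T: "openin (top_of_set P) T" "g 0 \<in> T"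
  obtains t where "0 < t" "t \<le> 1" "g t \<in> T"
proof -
  obtain e where e: "e > 0" "\<forall>x\<in>P. dist x (g 0) < e \<longrightarrow> x \<in> T"
    using T unfolding openin_euclidean_subtopology_iff by blast
  have "continuous_on {0..1} g" "(0::real) \<in> {0..1}"
    using g unfolding path_in_def path_def by auto
  then obtain d where d: "d > 0" "\<forall>t\<in>{0..1}. dist t 0 < d \<longrightarrow> dist (g t) (g 0) < e"
    using e(1) unfolding continuous_on_iff by blast
  define t where "t = min (d / 2) 1"
  have "0 < t" "t \<le> 1" "dist t 0 < d"
    using d(1) by (auto simp: t_def dist_real_def)
  moreover have "g t \<in> P"
    using g \<open>0 < t\<close> \<open>t \<le> 1\<close> unfolding path_in_def path_image_def by auto
  ultimately show ?thesis
    using that d(2) e(2) by auto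
qed

text \<open>The library concatenation g +++ h is join_at (1/2) g h. Splitting at an arbitrary
  parameter lets a path assembled piece by piece keep the time scale of a given path.\<close>

definition join_at :: "real \<Rightarrow> (real \<Rightarrow> 'a) \<Rightarrow> (real \<Rightarrow> 'a) \<Rightarrow> real \<Rightarrow> 'a" where
  "join_at s g h t = (if t \<le> s then g (t / s) else h ((t - s) / (1 - s)))"

lemma join_at_0 [simp]: "0 < s \<Longrightarrow> join_at s g h 0 = g 0"
  by (simp add: join_at_def)

lemma join_at_1 [simp]: "s < 1 \<Longrightarrow> join_at s g h 1 = h 1"
  by (simp add: join_at_def)

lemma path_join_at:
  fixes g h :: "real \<Rightarrow> 'a::real_normed_vector"
  assumes g: "path g" and h: "path h" and gh: "g 1 = h 0" and s: "0 < s" "s < 1"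
  shows "path (join_at s g h)"
proof -
  have "continuous_on {t \<in> {0..1}. t \<le> s} (\<lambda>t. g (t / s))"
  proof (rule continuous_on_compose2[OF g[unfolded path_def]])
    show "continuous_on {t \<in> {0..1}. t \<le> s} (\<lambda>t. t / s)"
      using s by (intro continuous_intros) auto
    show "(\<lambda>t. t / s) ` {t \<in> {0..1}. t \<le> s} \<subseteq> {0..1}"
      using s by (auto simp: field_simps)
  qed
  moreover have "continuous_on {t \<in> {0..1}. s \<le> t} (\<lambda>t. h ((t - s) / (1 - s)))"
  proof (rule continuous_on_compose2[OF h[unfolded path_def]])
    show "continuous_on {t \<in> {0..1}. s \<le> t} (\<lambda>t. (t - s) / (1 - s))"
      using s by (intro continuous_intros) auto
    show "(\<lambda>t. (t - s) / (1 - s)) ` {t \<in> {0..1}. s \<le> t} \<subseteq> {0..1}"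
      using s by (auto simp: field_simps)
  qed
  ultimately have "continuous_on {0..1} (\<lambda>t. if id t \<le> s then g (t / s) else h ((t - s) / (1 - s)))"
    by (intro continuous_on_cases_le) (use gh s in \<open>auto intro: continuous_intros\<close>)
  then show ?thesis
    unfolding path_def join_at_def by simp
qed

lemma join_at_in_images:
  assumes s: "0 < s" "s < 1" and t: "t \<in> {0..1}"
  shows "join_at s g h t \<in> g ` {0..1} \<union> h ` {0..1}"
proof (cases "t \<le> s")
  case True
  then have "t / s \<in> {0..1}"
    using s t by (simp add: divide_simps)
  then show ?thesis
    using True by (simp add: join_at_def)
next
  case False
  then have "(t - s) / (1 - s) \<in> {0..1}"
    using s t by (simp add: divide_simps)
  then show ?thesis
    using False by (simp add: join_at_def)
qed

lemma join_at_in_images_open: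
  assumes s: "0 < s" "s < 1" and t: "t \<in> {0<..<1}"
  shows "join_at s g h t \<in> g ` {0<..<1} \<union> {g 1} \<union> h ` {0<..<1}"
proof -
  consider "t < s" | "t = s" | "s < t"
    by linarith
  then show ?thesis
  proof cases
    case 1
    then have "t / s \<in> {0<..<1}"
      using s t by (simp add: divide_simps)
    then show ?thesis
      using 1 by (simp add: join_at_def)
  next
    case 2
    then show ?thesis
      using s by (simp add: join_at_def)
  next
    case 3
    then have "(t - s) / (1 - s) \<in> {0<..<1}"
      using s t by (simp add: divide_simps)
    then show ?thesis
      using 3 by (simp add: join_at_def)
  qed
qed

lemma path_in_join_at:
  assumes "path_in P g" "path_in P h" "g 1 = h 0" "0 < s" "s < 1"
  shows "path_in P (join_at s g h)"
proof -
  have "path (join_at s g h)"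
    using assms path_join_at unfolding path_in_def by blast
  moreover have "path_image (join_at s g h) \<subseteq> P"
  proof
    fix x assume "x \<in> path_image (join_at s g h)"
    then obtain t where "t \<in> {0..1}" "x = join_at s g h t"
      unfolding path_image_def by blast
    then show "x \<in> P"
      using join_at_in_images[OF assms(4,5), of t g h] path_in_mem[OF assms(1)]
        path_in_mem[OF assms(2)] by auto
  qed
  ultimately show ?thesis
    unfolding path_in_def by blast
qed

lemma join_at_subpaths:
  assumes "0 < s" "s < 1"
  shows "join_at s (subpath 0 s \<pi>) (subpath s 1 \<pi>) = \<pi>"
proof
  fix t
  show "join_at s (subpath 0 s \<pi>) (subpath s 1 \<pi>) t = \<pi> t"
    using assms by (cases "t \<le> s") (simp_all add: join_at_def subpath_def)
qed

lemma path_rel_join_at: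
  assumes "path_rel R g g'" "path_rel R h h'" "0 < s" "s < 1"
  shows "path_rel R (join_at s g h) (join_at s g' h')"
  unfolding path_rel_def
proof
  fix t :: real assume t: "t \<in> {0..1}"
  show "(join_at s g h t, join_at s g' h' t) \<in> R"
  proof (cases "t \<le> s")
    case True
    then have "t / s \<in> {0..1}"
      using assms(3,4) t by (simp add: divide_simps)
    then show ?thesis
      using True assms(1) by (simp add: join_at_def path_rel_def)
  next
    case False
    then have "(t - s) / (1 - s) \<in> {0..1}"
      using assms(3,4) t by (simp add: divide_simps)
    then show ?thesis
      using False assms(2) by (simp add: join_at_def path_rel_def)
  qed
qed

section \<open>Simplexes and cells\<close>

lemma simplicial_complex_simplex:
  assumes "simplicial_complex K" "\<sigma> \<in> K"
  obtains S where "finite S" "\<not> affine_dependent S" "\<sigma> = convex hull S"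
  using assms unfolding simplicial_complex_def is_simplex_def by blast

lemma simplicial_complex_convex: "simplicial_complex K \<Longrightarrow> \<sigma> \<in> K \<Longrightarrow> convex \<sigma>"
  by (metis simplicial_complex_simplex convex_convex_hull)

lemma simplicial_complex_closed: "simplicial_complex K \<Longrightarrow> \<sigma> \<in> K \<Longrightarrow> closed \<sigma>"
  by (metis simplicial_complex_simplex compact_imp_closed finite_imp_compact_convex_hull)

lemma simplex_subset_polyhedron: "\<sigma> \<in> K \<Longrightarrow> \<sigma> \<subseteq> polyhedron K"
  unfolding polyhedron_def by blast

lemma rel_interior_subset_polyhedron: "\<sigma> \<in> K \<Longrightarrow> rel_interior \<sigma> \<subseteq> polyhedron K"
  using rel_interior_subset simplex_subset_polyhedron by blast

lemma simplex_relint_eq_rel_interior: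
  assumes "is_simplex \<sigma>"
  shows "simplex_relint \<sigma> = rel_interior \<sigma>"
proof
  show "simplex_relint \<sigma> \<subseteq> rel_interior \<sigma>"
  proof
    fix x assume "x \<in> simplex_relint \<sigma>"
    then obtain S l where "\<not> affine_dependent S" "\<sigma> = convex hull S" "\<forall>v\<in>S. 0 < l v"
        "sum l S = 1" "x = (\<Sum>v\<in>S. l v *\<^sub>R v)"
      unfolding simplex_relint_def by blast
    then show "x \<in> rel_interior \<sigma>"
      by (auto simp: rel_interior_convex_hull_explicit)
  qed
next
  obtain S where S: "finite S" "\<not> affine_dependent S" "\<sigma> = convex hull S"
    using assms unfolding is_simplex_def by blast
  show "rel_interior \<sigma> \<subseteq> simplex_relint \<sigma>"
  proof
    fix x assume "x \<in> rel_interior \<sigma>"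
    then obtain u where u: "\<forall>v\<in>S. 0 < u v" "sum u S = 1" "x = (\<Sum>v\<in>S. u v *\<^sub>R v)"
      using S by (auto simp: rel_interior_convex_hull_explicit)
    have "u v \<le> 1" if "v \<in> S" for v
      using member_le_sum[of v S u] u S(1) that by (simp add: less_imp_le)
    then show "x \<in> simplex_relint \<sigma>"
      unfolding simplex_relint_def using S u by blast
  qed
qed

lemma cells_eq:
  assumes K: "simplicial_complex K"
  shows "cells K = rel_interior ` K - {{}}"
proof -
  have "simplex_relint \<sigma> = rel_interior \<sigma>" if "\<sigma> \<in> K" for \<sigma>
  proof -
    have "is_simplex \<sigma>"
      using K that unfolding simplicial_complex_def by blast
    then show ?thesis
      by (rule simplex_relint_eq_rel_interior)
  qed
  moreover have "rel_interior \<sigma> = {} \<longleftrightarrow> \<sigma> = {}" if "\<sigma> \<in> K" for \<sigma>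
    using rel_interior_eq_empty simplicial_complex_convex[OF K that] by blast
  ultimately show ?thesis
    unfolding cells_def by (auto simp: image_iff) (metis empty_iff)
qed

lemma cellsE:
  assumes "simplicial_complex K" "c \<in> cells K"
  obtains \<sigma> where "\<sigma> \<in> K" "c = rel_interior \<sigma>"
  using assms by (auto simp: cells_eq)

lemma rel_interior_in_cells:
  "simplicial_complex K \<Longrightarrow> \<sigma> \<in> K \<Longrightarrow> p \<in> rel_interior \<sigma> \<Longrightarrow> rel_interior \<sigma> \<in> cells K"
  by (auto simp: cells_eq)

lemma polyhedron_in_cells:
  assumes K: "simplicial_complex K" and p: "p \<in> polyhedron K"
  obtains \<sigma> where "\<sigma> \<in> K" "p \<in> rel_interior \<sigma>"
proof -
  obtain \<sigma> where \<sigma>: "\<sigma> \<in> K" "p \<in> \<sigma>"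
    using p unfolding polyhedron_def by blast
  then obtain S where S: "finite S" "\<not> affine_dependent S" "\<sigma> = convex hull S"
    using K simplicial_complex_simplex by blast
  then obtain u where u: "\<forall>v\<in>S. 0 \<le> u v" "sum u S = 1" "(\<Sum>v\<in>S. u v *\<^sub>R v) = p"
    using \<sigma>(2) by (auto simp: convex_hull_finite)
  define T where "T = {v\<in>S. 0 < u v}"
  have TS: "T \<subseteq> S" and pos: "\<forall>v\<in>T. 0 < u v"
    by (auto simp: T_def)
  have zero: "\<forall>v\<in>S - T. u v = 0"
    using u(1) by (force simp: T_def)
  have "is_face (convex hull T) \<sigma>"
    unfolding is_face_def using S TS by blast
  then have "convex hull T \<in> K"
    using K \<sigma>(1) unfolding simplicial_complex_def by blast
  moreover have "p \<in> rel_interior (convex hull T)"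
  proof -
    have "sum u T = 1"
      using u(2) zero sum.mono_neutral_left[OF S(1) TS, of u] by simp
    moreover have "(\<Sum>v\<in>T. u v *\<^sub>R v) = p"
      using u(3) zero sum.mono_neutral_left[OF S(1) TS, of "\<lambda>v. u v *\<^sub>R v"] by simp
    moreover have "\<not> affine_dependent T"
      using S(2) TS affine_dependent_subset by blast
    ultimately show ?thesis
      using pos rel_interior_convex_hull_explicit by blast
  qed
  ultimately show ?thesis
    using that by blast
qed

lemma rel_interior_meets_imp_subset:
  assumes K: "simplicial_complex K" and "\<rho> \<in> K" "\<sigma> \<in> K"
    and p: "p \<in> rel_interior \<rho>" "p \<in> \<sigma>"
  shows "\<rho> \<subseteq> \<sigma>"
proof -
  have "is_face (\<rho> \<inter> \<sigma>) \<rho>"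
    using K assms(2,3) unfolding simplicial_complex_def by blast
  then obtain S T where "\<not> affine_dependent S" "\<rho> = convex hull S" "T \<subseteq> S" "\<rho> \<inter> \<sigma> = convex hull T"
    unfolding is_face_def by blast
  then have "\<rho> \<inter> \<sigma> face_of \<rho>"
    using face_of_convex_hull_affine_independent by blast
  moreover have "(\<rho> \<inter> \<sigma>) \<inter> rel_interior \<rho> \<noteq> {}"
    using p rel_interior_subset by blast
  ultimately show ?thesis
    using subset_of_face_of[of "\<rho> \<inter> \<sigma>" \<rho> \<rho>] by blast
qed

lemma rel_interior_meets_imp_eq:
  assumes "simplicial_complex K" "\<rho> \<in> K" "\<sigma> \<in> K" "p \<in> rel_interior \<rho>" "p \<in> rel_interior \<sigma>"
  shows "\<rho> = \<sigma>"
  using rel_interior_meets_imp_subset[OF assms(1-4)] rel_interior_meets_imp_subset[OF assms(1,3,2,5)]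
    assms(4,5) rel_interior_subset by blast

lemma open_star:
  assumes K: "simplicial_complex K"
  obtains e where "e > 0" "\<And>\<sigma> q. \<sigma> \<in> K \<Longrightarrow> q \<in> \<sigma> \<Longrightarrow> dist q p < e \<Longrightarrow> p \<in> \<sigma>"
proof -
  let ?C = "\<Union>{\<sigma>\<in>K. p \<notin> \<sigma>}"
  have "closed ?C"
    using K simplicial_complex_closed by (intro closed_Union) (auto simp: simplicial_complex_def)
  then have "open (- ?C)"
    by (simp add: open_Compl)
  moreover have "p \<in> - ?C"
    by blast
  ultimately obtain e where e: "e > 0" "ball p e \<subseteq> - ?C"
    by (meson open_contains_ball)
  show ?thesis
  proof (rule that[OF e(1)])
    fix \<sigma> q assume "\<sigma> \<in> K" "q \<in> \<sigma>" "dist q p < e"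
    moreover have "q \<notin> ?C"
      using e(2) \<open>dist q p < e\<close> by (auto simp: dist_commute)
    ultimately show "p \<in> \<sigma>"
      by blast
  qed
qed

lemma path_locally_in_star:
  assumes K: "simplicial_complex K" and \<pi>: "path_in (polyhedron K) \<pi>" and t0: "t0 \<in> {0..1}"
  obtains d where "d > 0"
    "\<And>t. t \<in> {0..1} \<Longrightarrow> dist t t0 < d \<Longrightarrow> \<exists>\<sigma>\<in>K. \<pi> t \<in> rel_interior \<sigma> \<and> \<pi> t0 \<in> \<sigma>"
proof -
  obtain e where e: "e > 0" "\<And>\<sigma> q. \<sigma> \<in> K \<Longrightarrow> q \<in> \<sigma> \<Longrightarrow> dist q (\<pi> t0) < e \<Longrightarrow> \<pi> t0 \<in> \<sigma>"
    using open_star[OF K] by blast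
  have "continuous_on {0..1} \<pi>"
    using \<pi> unfolding path_in_def path_def by blast
  then obtain d where d: "d > 0" "\<forall>t\<in>{0..1}. dist t t0 < d \<longrightarrow> dist (\<pi> t) (\<pi> t0) < e"
    using t0 e(1) unfolding continuous_on_iff by blast
  have "\<exists>\<sigma>\<in>K. \<pi> t \<in> rel_interior \<sigma> \<and> \<pi> t0 \<in> \<sigma>" if t: "t \<in> {0..1}" "dist t t0 < d" for t
  proof -
    obtain \<sigma> where "\<sigma> \<in> K" "\<pi> t \<in> rel_interior \<sigma>"
      using polyhedron_in_cells[OF K path_in_mem[OF \<pi> t(1)]] by blast
    then show ?thesis
      using e(2) d(2) t rel_interior_subset by blast
  qed
  then show ?thesis
    using that d(1) by blast
qed

lemma path_in_linepath:
  assumes "simplicial_complex K" "\<sigma> \<in> K" "a \<in> \<sigma>" "b \<in> \<sigma>"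
  shows "path_in (polyhedron K) (linepath a b)"
proof -
  have "closed_segment a b \<subseteq> \<sigma>"
    using assms closed_segment_subset simplicial_complex_convex by blast
  then show ?thesis
    unfolding path_in_def using simplex_subset_polyhedron[OF assms(2)] by auto
qed

lemma linepath_in_rel_interior:
  fixes \<sigma> :: "'a::euclidean_space set"
  assumes "convex \<sigma>" "a \<in> \<sigma>" "b \<in> rel_interior \<sigma>" "0 < t" "t \<le> 1"
  shows "linepath a b t \<in> rel_interior \<sigma>"
proof -
  have "linepath a b t = a - t *\<^sub>R (a - b)"
    by (simp add: linepath_def algebra_simps)
  then show ?thesis
    using rel_interior_closure_convex_shrink[of \<sigma> b a t] assms closure_subset by auto
qed

section \<open>Simplicial paths\<close>

definition cell_subdivision ::
    "'a::euclidean_space set set \<Rightarrow> (real \<Rightarrow> 'a) \<Rightarrow> nat \<Rightarrow> (nat \<Rightarrow> real) \<Rightarrow> (nat \<Rightarrow> 'a set) \<Rightarrow> bool"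
  where "cell_subdivision K \<pi> k s c \<longleftrightarrow> k \<ge> 1 \<and> s 0 = 0 \<and> s k = 1 \<and> (\<forall>i<k. s i < s (Suc i))
    \<and> (\<forall>i\<in>{1..k}. c i \<in> cells K \<and> \<pi> ` {s (i - 1)<..<s i} \<subseteq> c i)"

lemma simplicial_path_iff_subdivision:
  "simplicial_path K \<pi> \<longleftrightarrow> path_in (polyhedron K) \<pi> \<and> (\<exists>k s c. cell_subdivision K \<pi> k s c)"
  unfolding simplicial_path_def cell_subdivision_def by blast

lemma simplicial_path_in: "simplicial_path K \<pi> \<Longrightarrow> path_in (polyhedron K) \<pi>"
  unfolding simplicial_path_def by blast

lemma chain_less:
  fixes s :: "nat \<Rightarrow> real"
  assumes "\<forall>i<k. s i < s (Suc i)" "i < j" "j \<le> k"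
  shows "s i < s j"
  using assms(2,3)
proof (induction j)
  case (Suc j)
  then show ?case
    using assms(1) by (cases "i = j") (auto intro: less_trans)
qed simp

lemma cell_subdivision_range:
  assumes "cell_subdivision K \<pi> k s c" "i \<le> k"
  shows "0 \<le> s i" "s i \<le> 1"
proof -
  have le: "s i \<le> s j" if "i \<le> j" "j \<le> k" for i j
    using chain_less[of k s i j] assms(1) that unfolding cell_subdivision_def
    by (cases "i = j") auto
  show "0 \<le> s i" "s i \<le> 1"
    using le[of 0 i] le[of i k] assms unfolding cell_subdivision_def by auto
qed

lemma cell_subdivision_join_at:
  assumes g: "cell_subdivision K g k1 s1 c1" and h: "cell_subdivision K h k2 s2 c2"
    and s: "0 < s" "s < 1"
  shows "cell_subdivision K (join_at s g h) (k1 + k2)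
    (\<lambda>i. if i \<le> k1 then s * s1 i else s + (1 - s) * s2 (i - k1))
    (\<lambda>i. if i \<le> k1 then c1 i else c2 (i - k1))"
proof -
  define ss where "ss = (\<lambda>i. if i \<le> k1 then s * s1 i else s + (1 - s) * s2 (i - k1))"
  have g1: "k1 \<ge> 1" "s1 0 = 0" "s1 k1 = 1" "\<forall>i<k1. s1 i < s1 (Suc i)"
    "\<forall>i\<in>{1..k1}. c1 i \<in> cells K \<and> g ` {s1 (i - 1)<..<s1 i} \<subseteq> c1 i"
    using g unfolding cell_subdivision_def by auto
  have h1: "k2 \<ge> 1" "s2 0 = 0" "s2 k2 = 1" "\<forall>i<k2. s2 i < s2 (Suc i)"
    "\<forall>i\<in>{1..k2}. c2 i \<in> cells K \<and> h ` {s2 (i - 1)<..<s2 i} \<subseteq> c2 i"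
    using h unfolding cell_subdivision_def by auto
  have ss_hi: "ss i = s + (1 - s) * s2 (i - k1)" if "k1 \<le> i" for i
    using that g1(3) h1(2) by (cases "i = k1") (auto simp: ss_def)
  have strict: "\<forall>i<k1 + k2. ss i < ss (Suc i)"
  proof (intro allI impI)
    fix i assume i: "i < k1 + k2"
    show "ss i < ss (Suc i)"
    proof (cases "Suc i \<le> k1")
      case True
      then show ?thesis
        using g1(4) s by (auto simp: ss_def)
    next
      case False
      then have "ss i = s + (1 - s) * s2 (i - k1)" "ss (Suc i) = s + (1 - s) * s2 (Suc (i - k1))"
        using ss_hi[of i] ss_hi[of "Suc i"] by (auto simp: Suc_diff_le)
      moreover have "s2 (i - k1) < s2 (Suc (i - k1))"
        using h1(4) i False by auto
      ultimately show ?thesis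
        using s by simp
    qed
  qed
  have pieces: "(if i \<le> k1 then c1 i else c2 (i - k1)) \<in> cells K
      \<and> join_at s g h ` {ss (i - 1)<..<ss i} \<subseteq> (if i \<le> k1 then c1 i else c2 (i - k1))"
    if i: "i \<in> {1..k1+k2}" for i
  proof (cases "i \<le> k1")
    case True
    have "join_at s g h ` {ss (i - 1)<..<ss i} \<subseteq> c1 i"
    proof
      fix x assume "x \<in> join_at s g h ` {ss (i - 1)<..<ss i}"
      moreover have "ss (i - 1) = s * s1 (i - 1)" "ss i = s * s1 i"
        using True by (auto simp: ss_def)
      ultimately obtain t where t: "s * s1 (i - 1) < t" "t < s * s1 i" "x = join_at s g h t"
        by auto
      have "s * s1 i \<le> s"
        using cell_subdivision_range(2)[OF g True] s by (simp add: mult_left_le)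
      then have "t \<le> s"
        using t(2) by linarith
      moreover have "t / s \<in> {s1 (i - 1)<..<s1 i}"
        using t s by (auto simp: field_simps)
      moreover have "g ` {s1 (i - 1)<..<s1 i} \<subseteq> c1 i"
        using g1(5) i True by simp
      ultimately show "x \<in> c1 i"
        using t(3) by (auto simp: join_at_def)
    qed
    then show ?thesis
      using True g1(5) i by simp
  next
    case False
    define j where "j = i - k1"
    have j: "j \<in> {1..k2}"
      using i False by (auto simp: j_def)
    have "join_at s g h ` {ss (i - 1)<..<ss i} \<subseteq> c2 j"
    proof
      fix x assume "x \<in> join_at s g h ` {ss (i - 1)<..<ss i}"
      moreover have "ss (i - 1) = s + (1 - s) * s2 (j - 1)" "ss i = s + (1 - s) * s2 j"
        using ss_hi[of "i - 1"] ss_hi[of i] False by (auto simp: j_def)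
      ultimately obtain t where t: "s + (1 - s) * s2 (j - 1) < t" "t < s + (1 - s) * s2 j"
        "x = join_at s g h t"
        by auto
      have "j - 1 \<le> k2"
        using j by auto
      then have "0 \<le> s2 (j - 1)"
        by (rule cell_subdivision_range(1)[OF h])
      then have "0 \<le> (1 - s) * s2 (j - 1)"
        using s by simp
      then have "s < t"
        using t(1) by linarith
      moreover have "(t - s) / (1 - s) \<in> {s2 (j - 1)<..<s2 j}"
        using t s by (auto simp: field_simps)
      moreover have "h ` {s2 (j - 1)<..<s2 j} \<subseteq> c2 j"
        using h1(5) j by simp
      ultimately show "x \<in> c2 j"
        using t(3) by (auto simp: join_at_def)
    qed
    then show ?thesis
      using False h1(5) j by (simp add: j_def)
  qed
  show ?thesis
    unfolding cell_subdivision_def ss_def[symmetric]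
    using strict pieces g1 h1 by (auto simp: ss_def)
qed

lemma simplicial_path_join_at:
  assumes "simplicial_path K g" "simplicial_path K h" "g 1 = h 0" "0 < s" "s < 1"
  shows "simplicial_path K (join_at s g h)"
proof -
  obtain k1 s1 c1 k2 s2 c2 where "cell_subdivision K g k1 s1 c1" "cell_subdivision K h k2 s2 c2"
    using assms(1,2) simplicial_path_iff_subdivision by meson
  then have "\<exists>k ss cc. cell_subdivision K (join_at s g h) k ss cc"
    using cell_subdivision_join_at assms(4,5) by blast
  moreover have "path_in (polyhedron K) (join_at s g h)"
    using path_in_join_at assms simplicial_path_in by blast
  ultimately show ?thesis
    using simplicial_path_iff_subdivision by blast
qed

lemma cell_subdivision_suffix:
  assumes p: "cell_subdivision K \<pi> (Suc k) s c" and k: "k \<ge> 1"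
  shows "cell_subdivision K (subpath (s 1) 1 \<pi>) k (\<lambda>i. (s (Suc i) - s 1) / (1 - s 1)) (\<lambda>i. c (Suc i))"
proof -
  have p1: "s (Suc k) = 1" "\<forall>i<Suc k. s i < s (Suc i)"
    "\<forall>i\<in>{1..Suc k}. c i \<in> cells K \<and> \<pi> ` {s (i - 1)<..<s i} \<subseteq> c i"
    using p unfolding cell_subdivision_def by auto
  have s1: "s 1 < 1"
    using chain_less[OF p1(2), of 1 "Suc k"] k p1(1) by simp
  have strict: "\<forall>i<k. (s (Suc i) - s 1) / (1 - s 1) < (s (Suc (Suc i)) - s 1) / (1 - s 1)"
    using p1(2) s1 by (auto simp: divide_strict_right_mono)
  have pieces: "c (Suc i) \<in> cells K \<and> subpath (s 1) 1 \<pi> `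
      {(s (Suc (i - 1)) - s 1) / (1 - s 1)<..<(s (Suc i) - s 1) / (1 - s 1)} \<subseteq> c (Suc i)"
    if i: "i \<in> {1..k}" for i
  proof -
    have ci: "c (Suc i) \<in> cells K" "\<pi> ` {s i<..<s (Suc i)} \<subseteq> c (Suc i)"
      using bspec[OF p1(3), of "Suc i"] i by auto
    have "subpath (s 1) 1 \<pi> `
        {(s (Suc (i - 1)) - s 1) / (1 - s 1)<..<(s (Suc i) - s 1) / (1 - s 1)} \<subseteq> c (Suc i)"
    proof
      fix x assume "x \<in> subpath (s 1) 1 \<pi> `
        {(s (Suc (i - 1)) - s 1) / (1 - s 1)<..<(s (Suc i) - s 1) / (1 - s 1)}"
      then obtain t where t: "(s i - s 1) / (1 - s 1) < t" "t < (s (Suc i) - s 1) / (1 - s 1)"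
        "x = \<pi> ((1 - s 1) * t + s 1)"
        using i by (auto simp: subpath_def)
      have "(1 - s 1) * t + s 1 \<in> {s i<..<s (Suc i)}"
        using t(1,2) s1 by (auto simp: field_simps)
      then show "x \<in> c (Suc i)"
        using ci t(3) by blast
    qed
    then show ?thesis
      using ci by blast
  qed
  show ?thesis
    unfolding cell_subdivision_def using k strict pieces s1 p1(1) by auto
qed

lemma simplicial_linepath:
  assumes K: "simplicial_complex K" and \<sigma>: "\<sigma> \<in> K" "a \<in> \<sigma>" and b: "b \<in> rel_interior \<sigma>"
  shows "simplicial_path K (linepath a b)" "linepath a b ` {0<..<1} \<subseteq> rel_interior \<sigma>"
    and "simplicial_path K (linepath b a)" "linepath b a ` {0<..<1} \<subseteq> rel_interior \<sigma>"
proof -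
  have conv: "convex \<sigma>"
    using K \<sigma>(1) by (rule simplicial_complex_convex)
  show ab: "linepath a b ` {0<..<1} \<subseteq> rel_interior \<sigma>"
    using linepath_in_rel_interior[OF conv \<sigma>(2) b] by auto
  show ba: "linepath b a ` {0<..<1} \<subseteq> rel_interior \<sigma>"
  proof
    fix x assume "x \<in> linepath b a ` {0<..<1}"
    then obtain t where t: "0 < t" "t < 1" "x = linepath b a t"
      by auto
    moreover have "linepath b a t = linepath a b (1 - t)"
      by (simp add: linepath_def algebra_simps)
    ultimately show "x \<in> rel_interior \<sigma>"
      using linepath_in_rel_interior[OF conv \<sigma>(2) b, of "1 - t"] by simp
  qed
  have "b \<in> \<sigma>"
    using b rel_interior_subset by blast
  then have "path_in (polyhedron K) (linepath a b)" "path_in (polyhedron K) (linepath b a)"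
    using path_in_linepath[OF K \<sigma>(1)] \<sigma>(2) by auto
  moreover have "cell_subdivision K (linepath a b) 1 real (\<lambda>_. rel_interior \<sigma>)"
    "cell_subdivision K (linepath b a) 1 real (\<lambda>_. rel_interior \<sigma>)"
    using rel_interior_in_cells[OF K \<sigma>(1) b] ab ba unfolding cell_subdivision_def by auto
  ultimately show "simplicial_path K (linepath a b)" "simplicial_path K (linepath b a)"
    unfolding simplicial_path_iff_subdivision by blast+
qed

section \<open>Unions of cells and simplicial paths\<close>

definition cell_invariant :: "'a::euclidean_space set set \<Rightarrow> 'a set \<Rightarrow> bool" where
  "cell_invariant K A \<longleftrightarrow> (\<forall>\<sigma>\<in>K. \<forall>p\<in>rel_interior \<sigma>. p \<in> A \<longrightarrow> rel_interior \<sigma> \<subseteq> A)"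

lemma cell_invariantD:
  "cell_invariant K A \<Longrightarrow> \<sigma> \<in> K \<Longrightarrow> p \<in> rel_interior \<sigma> \<Longrightarrow> p \<in> A \<Longrightarrow> rel_interior \<sigma> \<subseteq> A"
  unfolding cell_invariant_def by blast

definition simplicial_link :: "'a::euclidean_space set set \<Rightarrow> 'a set \<Rightarrow> 'a \<Rightarrow> 'a \<Rightarrow> bool" where
  "simplicial_link K A p q \<longleftrightarrow>
    (\<exists>g. simplicial_path K g \<and> g 0 = p \<and> g 1 = q \<and> g ` {0<..<1} \<subseteq> A)"

lemma simplicial_link_trans:
  assumes "simplicial_link K A p q" "simplicial_link K A q r" "q \<in> A"
  shows "simplicial_link K A p r"
proof -
  obtain g h where g: "simplicial_path K g" "g 0 = p" "g 1 = q" "g ` {0<..<1} \<subseteq> A"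
    and h: "simplicial_path K h" "h 0 = q" "h 1 = r" "h ` {0<..<1} \<subseteq> A"
    using assms(1,2) unfolding simplicial_link_def by blast
  have "join_at (1/2) g h ` {0<..<1} \<subseteq> A"
  proof
    fix x assume "x \<in> join_at (1/2) g h ` {0<..<1}"
    then obtain t where "t \<in> {0<..<1}" "x = join_at (1/2) g h t"
      by blast
    then show "x \<in> A"
      using join_at_in_images_open[of "1/2" t g h] g(3,4) h(4) assms(3) by auto
  qed
  moreover have "simplicial_path K (join_at (1/2) g h)"
    using simplicial_path_join_at[OF g(1) h(1)] g(3) h(2) by simp
  ultimately show ?thesis
    unfolding simplicial_link_def using g(2) h(3) by (intro exI[of _ "join_at (1/2) g h"]) auto
qed

lemma simplicial_link_in_simplex:
  assumes "simplicial_complex K" "\<sigma> \<in> K" "a \<in> \<sigma>" "b \<in> rel_interior \<sigma>" "rel_interior \<sigma> \<subseteq> A"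
  shows "simplicial_link K A a b" "simplicial_link K A b a"
proof -
  note l = simplicial_linepath[OF assms(1-4)]
  show "simplicial_link K A a b"
    unfolding simplicial_link_def using l(1,2) assms(5)
    by (intro exI[of _ "linepath a b"]) (auto simp: linepath_0' linepath_1')
  show "simplicial_link K A b a"
    unfolding simplicial_link_def using l(3,4) assms(5)
    by (intro exI[of _ "linepath b a"]) (auto simp: linepath_0' linepath_1')
qed

text \<open>Points of the path near time t0 lie in cells whose closures contain the point at t0, so
  they are joined to it by segments inside cells; connectedness of the open unit interval carries
  this from the start to the end of the path.\<close>

lemma simplicial_link_of_path:
  assumes K: "simplicial_complex K" and A: "cell_invariant K A"
    and \<pi>: "path_in (polyhedron K) \<pi>" "\<pi> ` {0<..<1} \<subseteq> A"
  shows "simplicial_link K A (\<pi> 0) (\<pi> 1)"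
proof -
  have near: "\<exists>d>0. \<forall>t\<in>{0<..<1}. dist t t0 < d \<longrightarrow>
      simplicial_link K A (\<pi> t) (\<pi> t0) \<and> simplicial_link K A (\<pi> t0) (\<pi> t)"
    if t0: "t0 \<in> {0..1}" for t0
  proof -
    obtain d where d: "d > 0"
      "\<And>t. t \<in> {0..1} \<Longrightarrow> dist t t0 < d \<Longrightarrow> \<exists>\<sigma>\<in>K. \<pi> t \<in> rel_interior \<sigma> \<and> \<pi> t0 \<in> \<sigma>"
      using path_locally_in_star[OF K \<pi>(1) t0] by blast
    have "simplicial_link K A (\<pi> t) (\<pi> t0) \<and> simplicial_link K A (\<pi> t0) (\<pi> t)"
      if t: "t \<in> {0<..<1}" "dist t t0 < d" for t
    proof -
      obtain \<sigma> where \<sigma>: "\<sigma> \<in> K" "\<pi> t \<in> rel_interior \<sigma>" "\<pi> t0 \<in> \<sigma>"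
        using d(2)[of t] t by auto
      moreover have "rel_interior \<sigma> \<subseteq> A"
        using cell_invariantD[OF A \<sigma>(1,2)] \<pi>(2) t(1) by blast
      ultimately show ?thesis
        using simplicial_link_in_simplex[OF K] by blast
    qed
    then show ?thesis
      using d(1) by blast
  qed
  obtain d0 where d0: "d0 > 0" "\<forall>t\<in>{0<..<1}. dist t 0 < d0 \<longrightarrow> simplicial_link K A (\<pi> 0) (\<pi> t)"
    using near[of 0] by auto
  define a where "a = min (d0 / 2) (1 / 2)"
  have a: "a \<in> {0<..<1}" "dist a 0 < d0"
    using d0(1) by (auto simp: a_def dist_real_def)
  have linked: "simplicial_link K A (\<pi> 0) (\<pi> b)" if b: "b \<in> {0<..<1}" for b
  proof (rule connected_induction_simple[of "{0<..<1}" a b "\<lambda>t. simplicial_link K A (\<pi> 0) (\<pi> t)"])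
    show "connected {0<..<1::real}" "a \<in> {0<..<1}" "b \<in> {0<..<1}"
      using a b by auto
    show "simplicial_link K A (\<pi> 0) (\<pi> a)"
      using d0(2) a by blast
  next
    fix c :: real assume c: "c \<in> {0<..<1}"
    obtain d where d: "d > 0" "\<forall>t\<in>{0<..<1}. dist t c < d \<longrightarrow>
        simplicial_link K A (\<pi> t) (\<pi> c) \<and> simplicial_link K A (\<pi> c) (\<pi> t)"
      using near[of c] c by auto
    have step: "simplicial_link K A (\<pi> 0) (\<pi> y)"
      if x: "x \<in> {0<..<1} \<inter> ball c d" and y: "y \<in> {0<..<1} \<inter> ball c d"
        and "simplicial_link K A (\<pi> 0) (\<pi> x)" for x y
    proof -
      have "simplicial_link K A (\<pi> x) (\<pi> c)" "simplicial_link K A (\<pi> c) (\<pi> y)"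
        using d(2) x y by (auto simp: dist_commute)
      moreover have "\<pi> x \<in> A" "\<pi> c \<in> A"
        using \<pi>(2) x c by auto
      ultimately show ?thesis
        using simplicial_link_trans \<open>simplicial_link K A (\<pi> 0) (\<pi> x)\<close> by blast
    qed
    have "openin (top_of_set {0<..<1}) ({0<..<1} \<inter> ball c d)"
      by (intro openin_open_Int) auto
    moreover have "c \<in> {0<..<1} \<inter> ball c d"
      using c d(1) by simp
    ultimately show "\<exists>T. openin (top_of_set {0<..<1}) T \<and> c \<in> T \<and>
        (\<forall>x\<in>T. \<forall>y\<in>T. simplicial_link K A (\<pi> 0) (\<pi> x) \<longrightarrow> simplicial_link K A (\<pi> 0) (\<pi> y))"
      using step by blast
  qed
  obtain d1 where d1: "d1 > 0" "\<forall>t\<in>{0<..<1}. dist t 1 < d1 \<longrightarrow> simplicial_link K A (\<pi> t) (\<pi> 1)"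
    using near[of 1] by auto
  define b where "b = max (1 - d1 / 2) (1 / 2)"
  have b: "b \<in> {0<..<1}" "dist b 1 < d1"
    using d1(1) by (auto simp: b_def dist_real_def)
  moreover have "\<pi> b \<in> A"
    using \<pi>(2) b(1) by blast
  ultimately show ?thesis
    using simplicial_link_trans[OF linked[OF b(1)]] d1(2) by blast
qed

section \<open>Formulas denote unions of cells\<close>

lemma sem_subset_polyhedron: "sem K V \<phi> \<subseteq> polyhedron K"
  by (induction \<phi>) (auto dest: interior_of_subset[THEN subsetD])

lemma interior_of_cell_invariant_iff:
  assumes K: "simplicial_complex K" and A: "cell_invariant K A" and p: "p \<in> polyhedron K"
  shows "p \<in> top_of_set (polyhedron K) interior_of A \<longleftrightarrow>
    (\<forall>\<sigma>\<in>K. p \<in> \<sigma> \<longrightarrow> rel_interior \<sigma> \<subseteq> A)"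
proof
  assume "p \<in> top_of_set (polyhedron K) interior_of A"
  then obtain T where T: "openin (top_of_set (polyhedron K)) T" "p \<in> T" "T \<subseteq> A"
    unfolding interior_of_def by blast
  show "\<forall>\<sigma>\<in>K. p \<in> \<sigma> \<longrightarrow> rel_interior \<sigma> \<subseteq> A"
  proof (intro ballI impI)
    fix \<sigma> assume \<sigma>: "\<sigma> \<in> K" "p \<in> \<sigma>"
    have conv: "convex \<sigma>"
      using K \<sigma>(1) by (rule simplicial_complex_convex)
    then obtain b where b: "b \<in> rel_interior \<sigma>"
      using \<sigma>(2) rel_interior_eq_empty by blast
    have "path_in (polyhedron K) (linepath p b)"
      using path_in_linepath[OF K \<sigma>] b rel_interior_subset by blast
    moreover have "linepath p b 0 \<in> T"
      using T(2) by (simp add: linepath_0')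
    ultimately obtain t where "0 < t" "t \<le> 1" "linepath p b t \<in> T"
      using path_in_eventually_openin T(1) by blast
    then show "rel_interior \<sigma> \<subseteq> A"
      using cell_invariantD[OF A \<sigma>(1)] linepath_in_rel_interior[OF conv \<sigma>(2) b] T(3) by blast
  qed
next
  assume H: "\<forall>\<sigma>\<in>K. p \<in> \<sigma> \<longrightarrow> rel_interior \<sigma> \<subseteq> A"
  obtain e where e: "e > 0" "\<And>\<sigma> q. \<sigma> \<in> K \<Longrightarrow> q \<in> \<sigma> \<Longrightarrow> dist q p < e \<Longrightarrow> p \<in> \<sigma>"
    using open_star[OF K] by blast
  have "polyhedron K \<inter> ball p e \<subseteq> A"
  proof
    fix q assume q: "q \<in> polyhedron K \<inter> ball p e"
    then obtain \<sigma> where \<sigma>: "\<sigma> \<in> K" "q \<in> rel_interior \<sigma>"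
      using polyhedron_in_cells[OF K] by blast
    moreover have qp: "dist q p < e"
      using q by (simp add: dist_commute)
    have "p \<in> \<sigma>"
      using e(2)[OF \<sigma>(1) _ qp] \<sigma>(2) rel_interior_subset by blast
    ultimately show "q \<in> A"
      using H by blast
  qed
  moreover have "openin (top_of_set (polyhedron K)) (polyhedron K \<inter> ball p e)"
    by (intro openin_open_Int) auto
  moreover have "p \<in> polyhedron K \<inter> ball p e"
    using p e(1) by simp
  ultimately show "p \<in> top_of_set (polyhedron K) interior_of A"
    unfolding interior_of_def by blast
qed

lemma cell_invariant_interior_of:
  assumes K: "simplicial_complex K" and A: "cell_invariant K A"
  shows "cell_invariant K (top_of_set (polyhedron K) interior_of A)"
  unfolding cell_invariant_def
proof (intro ballI impI subsetI)
  fix \<rho> p q assume \<rho>: "\<rho> \<in> K" and p: "p \<in> rel_interior \<rho>"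
    and pA: "p \<in> top_of_set (polyhedron K) interior_of A" and q: "q \<in> rel_interior \<rho>"
  have "\<forall>\<sigma>\<in>K. q \<in> \<sigma> \<longrightarrow> rel_interior \<sigma> \<subseteq> A"
  proof (intro ballI impI)
    fix \<sigma> assume \<sigma>: "\<sigma> \<in> K" "q \<in> \<sigma>"
    then have "p \<in> \<sigma>"
      using rel_interior_meets_imp_subset[OF K \<rho> \<sigma>(1) q] p rel_interior_subset by blast
    then show "rel_interior \<sigma> \<subseteq> A"
      using pA \<sigma>(1) interior_of_cell_invariant_iff[OF K A] p rel_interior_subset_polyhedron[OF \<rho>]
      by blast
  qed
  then show "q \<in> top_of_set (polyhedron K) interior_of A"
    using interior_of_cell_invariant_iff[OF K A] q rel_interior_subset_polyhedron[OF \<rho>] by blast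
qed

text \<open>Right after time 0, a path from a point p of a cell runs in the relative interior of a
  simplex containing p, and that simplex contains the whole cell; so any other point q of the cell
  reaches the path along a segment inside it.\<close>

lemma cell_invariant_sem_gamma:
  assumes K: "simplicial_complex K" and A: "cell_invariant K (sem K V \<phi>)"
  shows "cell_invariant K (sem K V (FGamma \<phi> \<psi>))"
  unfolding cell_invariant_def
proof (intro ballI impI subsetI)
  fix \<rho> p q assume \<rho>: "\<rho> \<in> K" and p: "p \<in> rel_interior \<rho>"
    and "p \<in> sem K V (FGamma \<phi> \<psi>)" and q: "q \<in> rel_interior \<rho>"
  then obtain \<pi> where \<pi>: "path_in (polyhedron K) \<pi>" "\<pi> 0 = p" "\<pi> ` {0<..<1} \<subseteq> sem K V \<phi>"
    "\<pi> 1 \<in> sem K V \<psi>"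
    by auto
  obtain d where d: "d > 0"
    "\<And>t. t \<in> {0..1} \<Longrightarrow> dist t 0 < d \<Longrightarrow> \<exists>\<sigma>\<in>K. \<pi> t \<in> rel_interior \<sigma> \<and> \<pi> 0 \<in> \<sigma>"
    using path_locally_in_star[OF K \<pi>(1), of 0] by auto
  define t0 where "t0 = min (d / 2) (1 / 2)"
  have t0: "t0 \<in> {0<..<1}" "dist t0 0 < d"
    using d(1) by (auto simp: t0_def dist_real_def)
  then obtain \<sigma> where \<sigma>: "\<sigma> \<in> K" "\<pi> t0 \<in> rel_interior \<sigma>" "p \<in> \<sigma>"
    using d(2)[of t0] \<pi>(2) by auto
  have "q \<in> \<sigma>"
    using rel_interior_meets_imp_subset[OF K \<rho> \<sigma>(1) p \<sigma>(3)] q rel_interior_subset by blast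
  moreover have "rel_interior \<sigma> \<subseteq> sem K V \<phi>"
    using cell_invariantD[OF A \<sigma>(1,2)] \<pi>(3) t0(1) by blast
  ultimately have l: "path_in (polyhedron K) (linepath q (\<pi> t0))"
      "linepath q (\<pi> t0) ` {0<..<1} \<subseteq> sem K V \<phi>"
    using simplicial_linepath(1,2)[OF K \<sigma>(1) _ \<sigma>(2)] simplicial_path_in by blast+
  have s: "path_in (polyhedron K) (subpath t0 1 \<pi>)" "subpath t0 1 \<pi> ` {0<..<1} \<subseteq> sem K V \<phi>"
  proof -
    show "path_in (polyhedron K) (subpath t0 1 \<pi>)"
      using path_in_subpath[OF \<pi>(1)] t0(1) by simp
    have "subpath t0 1 \<pi> ` {0<..<1} = \<pi> ` {t0<..<1}"
      using t0(1) by (simp add: subpath_image_open_interval)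
    then show "subpath t0 1 \<pi> ` {0<..<1} \<subseteq> sem K V \<phi>"
      using \<pi>(3) t0(1) by auto
  qed
  let ?\<pi> = "join_at (1/2) (linepath q (\<pi> t0)) (subpath t0 1 \<pi>)"
  have "?\<pi> ` {0<..<1} \<subseteq> sem K V \<phi>"
  proof
    fix x assume "x \<in> ?\<pi> ` {0<..<1}"
    then obtain t where "t \<in> {0<..<1}" "x = ?\<pi> t"
      by blast
    moreover have "\<pi> t0 \<in> sem K V \<phi>"
      using \<pi>(3) t0(1) by blast
    ultimately show "x \<in> sem K V \<phi>"
      using join_at_in_images_open[of "1/2" t "linepath q (\<pi> t0)" "subpath t0 1 \<pi>"] l(2) s(2)
      by (auto simp: linepath_1')
  qed
  moreover have "path_in (polyhedron K) ?\<pi>"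
    using path_in_join_at[OF l(1) s(1)] by (simp add: subpath_def linepath_1')
  moreover have "?\<pi> 0 = q" "?\<pi> 1 = \<pi> 1"
    by (simp_all add: subpath_def linepath_0')
  ultimately have "path_in (polyhedron K) ?\<pi> \<and> ?\<pi> 0 = q \<and> ?\<pi> ` {0<..<1} \<subseteq> sem K V \<phi>
      \<and> ?\<pi> 1 \<in> sem K V \<psi>"
    using \<pi>(4) by simp
  moreover have "q \<in> polyhedron K"
    using q rel_interior_subset_polyhedron[OF \<rho>] by blast
  ultimately show "q \<in> sem K V (FGamma \<phi> \<psi>)"
    unfolding sem.simps by blast
qed

lemma cell_invariant_sem:
  assumes M: "polyhedral_model K V"
  shows "cell_invariant K (sem K V \<phi>)"
proof -
  have K: "simplicial_complex K"
    using M unfolding polyhedral_model_def by blast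
  show ?thesis
  proof (induction \<phi>)
    case FTop
    then show ?case
      by (simp add: cell_invariant_def rel_interior_subset_polyhedron)
  next
    case (FAtom a)
    obtain C where C: "C \<subseteq> cells K" "V a = \<Union>C"
      using M unfolding polyhedral_model_def by blast
    have cell: "rel_interior \<sigma> \<subseteq> V a" if \<sigma>: "\<sigma> \<in> K" "p \<in> rel_interior \<sigma>" "p \<in> V a" for \<sigma> p
    proof -
      obtain c where c: "c \<in> C" "p \<in> c"
        using C(2) \<sigma>(3) by blast
      moreover obtain \<tau> where "\<tau> \<in> K" "c = rel_interior \<tau>"
        using cellsE[OF K] C(1) c(1) by blast
      moreover have "\<tau> = \<sigma>"
        using rel_interior_meets_imp_eq[OF K \<open>\<tau> \<in> K\<close> \<sigma>(1)] calculation \<sigma>(2) by blast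
      ultimately show ?thesis
        using C(2) by blast
    qed
    show ?case
      unfolding cell_invariant_def
    proof (intro ballI impI subsetI)
      fix \<sigma> p q assume "\<sigma> \<in> K" "p \<in> rel_interior \<sigma>" "p \<in> sem K V (FAtom a)"
        and q: "q \<in> rel_interior \<sigma>"
      then show "q \<in> sem K V (FAtom a)"
        using cell[of \<sigma> p] rel_interior_subset_polyhedron by auto
    qed
  next
    case (FNeg \<phi>)
    show ?case
      unfolding cell_invariant_def
    proof (intro ballI impI subsetI)
      fix \<sigma> p q assume \<sigma>: "\<sigma> \<in> K" "p \<in> rel_interior \<sigma>" "p \<in> sem K V (FNeg \<phi>)"
        and q: "q \<in> rel_interior \<sigma>"
      have "q \<notin> sem K V \<phi>"
      proof
        assume "q \<in> sem K V \<phi>"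
        then have "p \<in> sem K V \<phi>"
          using cell_invariantD[OF FNeg \<sigma>(1) q] \<sigma>(2) by blast
        then show False
          using \<sigma>(3) by simp
      qed
      then show "q \<in> sem K V (FNeg \<phi>)"
        using q rel_interior_subset_polyhedron[OF \<sigma>(1)] by auto
    qed
  next
    case (FAnd \<phi> \<psi>)
    then show ?case
      unfolding cell_invariant_def sem.simps by blast
  next
    case (FBox \<phi>)
    then show ?case
      using cell_invariant_interior_of[OF K] by simp
  next
    case (FGamma \<phi> \<psi>)
    then show ?case
      using cell_invariant_sem_gamma[OF K] by blast
  qed
qed

section \<open>Simplicial bisimulations preserve formulas\<close>

lemma simplicial_bisimD:
  assumes "simplicial_bisim K V R" "(x, y) \<in> R"
  shows "x \<in> polyhedron K" "y \<in> polyhedron K" "\<And>p. x \<in> V p \<longleftrightarrow> y \<in> V p"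
    "\<And>\<pi>x. simplicial_path K \<pi>x \<Longrightarrow> \<pi>x 0 = x \<Longrightarrow>
      \<exists>\<pi>y. simplicial_path K \<pi>y \<and> \<pi>y 0 = y \<and> path_rel R \<pi>x \<pi>y"
    "\<And>\<pi>y. simplicial_path K \<pi>y \<Longrightarrow> \<pi>y 0 = y \<Longrightarrow>
      \<exists>\<pi>x. simplicial_path K \<pi>x \<and> \<pi>x 0 = x \<and> path_rel R \<pi>x \<pi>y"
  using assms unfolding simplicial_bisim_def by auto

lemma simplicial_bisim_converse:
  assumes "simplicial_bisim K V R"
  shows "simplicial_bisim K V (R\<inverse>)"
proof -
  have "path_rel (R\<inverse>) \<pi> \<pi>' \<longleftrightarrow> path_rel R \<pi>' \<pi>" for \<pi> \<pi>'
    unfolding path_rel_def by simp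
  then show ?thesis
    using assms unfolding simplicial_bisim_def by fastforce
qed

text \<open>A simplicial path from y into a cell adjacent to y but disjoint from A has to be matched by a
  path from x, which stays in A for a while.\<close>

lemma interior_of_transfer:
  assumes K: "simplicial_complex K" and A: "cell_invariant K A"
    and x: "x \<in> top_of_set (polyhedron K) interior_of A" and y: "y \<in> polyhedron K"
    and match: "\<And>\<pi>y. simplicial_path K \<pi>y \<Longrightarrow> \<pi>y 0 = y \<Longrightarrow>
      \<exists>\<pi>x. simplicial_path K \<pi>x \<and> \<pi>x 0 = x \<and> (\<forall>t\<in>{0..1}. \<pi>x t \<in> A \<longleftrightarrow> \<pi>y t \<in> A)"
  shows "y \<in> top_of_set (polyhedron K) interior_of A"
proof (rule ccontr)
  assume "y \<notin> top_of_set (polyhedron K) interior_of A"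
  then obtain \<sigma> b where \<sigma>: "\<sigma> \<in> K" "y \<in> \<sigma>" and b: "b \<in> rel_interior \<sigma>" "b \<notin> A"
    using interior_of_cell_invariant_iff[OF K A y] by blast
  then have disj: "rel_interior \<sigma> \<inter> A = {}"
    using cell_invariantD[OF A \<sigma>(1)] by blast
  obtain \<pi>x where \<pi>x: "simplicial_path K \<pi>x" "\<pi>x 0 = x"
      "\<forall>t\<in>{0..1}. \<pi>x t \<in> A \<longleftrightarrow> linepath y b t \<in> A"
    using match[OF simplicial_linepath(1)[OF K \<sigma> b(1)]] by (auto simp: linepath_0')
  obtain T where T: "openin (top_of_set (polyhedron K)) T" "x \<in> T" "T \<subseteq> A"
    using x unfolding interior_of_def by blast
  obtain t where t: "0 < t" "t \<le> 1" "\<pi>x t \<in> T"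
    using path_in_eventually_openin[OF simplicial_path_in[OF \<pi>x(1)] T(1)] \<pi>x(2) T(2) by auto
  moreover have "linepath y b t \<in> rel_interior \<sigma>"
    using linepath_in_rel_interior[OF simplicial_complex_convex[OF K \<sigma>(1)] \<sigma>(2) b(1) t(1,2)] .
  ultimately show False
    using \<pi>x(3) T(3) disj by auto
qed

lemma sem_gamma_transfer:
  assumes K: "simplicial_complex K" and A: "cell_invariant K (sem K V \<phi>)"
    and x: "x \<in> sem K V (FGamma \<phi> \<psi>)" and y: "y \<in> polyhedron K"
    and match: "\<And>\<pi>x. simplicial_path K \<pi>x \<Longrightarrow> \<pi>x 0 = x \<Longrightarrow>
      \<exists>\<pi>y. simplicial_path K \<pi>y \<and> \<pi>y 0 = y \<and> (\<forall>t\<in>{0..1}.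
        (\<pi>x t \<in> sem K V \<phi> \<longleftrightarrow> \<pi>y t \<in> sem K V \<phi>) \<and> (\<pi>x t \<in> sem K V \<psi> \<longleftrightarrow> \<pi>y t \<in> sem K V \<psi>))"
  shows "y \<in> sem K V (FGamma \<phi> \<psi>)"
proof -
  obtain \<pi> where \<pi>: "path_in (polyhedron K) \<pi>" "\<pi> 0 = x" "\<pi> ` {0<..<1} \<subseteq> sem K V \<phi>"
    "\<pi> 1 \<in> sem K V \<psi>"
    using x by auto
  obtain \<pi>' where \<pi>': "simplicial_path K \<pi>'" "\<pi>' 0 = x" "\<pi>' 1 = \<pi> 1" "\<pi>' ` {0<..<1} \<subseteq> sem K V \<phi>"
    using simplicial_link_of_path[OF K A \<pi>(1,3)] \<pi>(2) unfolding simplicial_link_def by auto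
  obtain \<pi>y where \<pi>y: "simplicial_path K \<pi>y" "\<pi>y 0 = y" "\<forall>t\<in>{0..1}.
      (\<pi>' t \<in> sem K V \<phi> \<longleftrightarrow> \<pi>y t \<in> sem K V \<phi>) \<and> (\<pi>' t \<in> sem K V \<psi> \<longleftrightarrow> \<pi>y t \<in> sem K V \<psi>)"
    using match[OF \<pi>'(1,2)] by blast
  have "\<pi>y ` {0<..<1} \<subseteq> sem K V \<phi>"
    using \<pi>y(3) \<pi>'(4) by fastforce
  moreover have "\<pi>y 1 \<in> sem K V \<psi>"
    using \<pi>y(3) \<pi>'(3) \<pi>(4) by auto
  ultimately have "path_in (polyhedron K) \<pi>y \<and> \<pi>y 0 = y \<and> \<pi>y ` {0<..<1} \<subseteq> sem K V \<phi>
      \<and> \<pi>y 1 \<in> sem K V \<psi>"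
    using \<pi>y(1,2) simplicial_path_in by blast
  then show ?thesis
    using y unfolding sem.simps by blast
qed

lemma simplicial_bisim_preserves_sem:
  assumes M: "polyhedral_model K V" and R: "simplicial_bisim K V R" and xy: "(x, y) \<in> R"
  shows "x \<in> sem K V \<phi> \<longleftrightarrow> y \<in> sem K V \<phi>"
proof -
  have K: "simplicial_complex K"
    using M unfolding polyhedral_model_def by blast
  show ?thesis
    using R xy
  proof (induction \<phi> arbitrary: R x y)
    case FTop
    then show ?case
      using simplicial_bisimD(1,2)[OF FTop.prems] by simp
  next
    case (FAtom p)
    then show ?case
      using simplicial_bisimD(1-3)[OF FAtom.prems] by simp
  next
    case (FNeg \<phi>)
    then show ?case
      using simplicial_bisimD(1,2)[OF FNeg.prems] by simp
  next
    case (FAnd \<phi> \<psi>)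
    then show ?case
      by simp
  next
    case (FBox \<phi>)
    have one_way: "y' \<in> sem K V (FBox \<phi>)"
      if R': "simplicial_bisim K V R'" "(x', y') \<in> R'" "x' \<in> sem K V (FBox \<phi>)" for R' x' y'
    proof -
      have "\<exists>\<pi>x. simplicial_path K \<pi>x \<and> \<pi>x 0 = x' \<and>
          (\<forall>t\<in>{0..1}. \<pi>x t \<in> sem K V \<phi> \<longleftrightarrow> \<pi>y t \<in> sem K V \<phi>)"
        if \<pi>y: "simplicial_path K \<pi>y" "\<pi>y 0 = y'" for \<pi>y
      proof -
        obtain \<pi>x where "simplicial_path K \<pi>x" "\<pi>x 0 = x'" "\<forall>t\<in>{0..1}. (\<pi>x t, \<pi>y t) \<in> R'"
          using simplicial_bisimD(5)[OF R'(1,2) \<pi>y] unfolding path_rel_def by blast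
        then show ?thesis
          using FBox.IH[OF R'(1)] by blast
      qed
      then show ?thesis
        using interior_of_transfer[OF K cell_invariant_sem[OF M]] R'(3)
          simplicial_bisimD(2)[OF R'(1,2)] by simp
    qed
    have "(y, x) \<in> R\<inverse>"
      using FBox.prems(2) by simp
    then show ?case
      using one_way[OF FBox.prems] one_way[OF simplicial_bisim_converse[OF FBox.prems(1)]] by blast
  next
    case (FGamma \<phi> \<psi>)
    have one_way: "y' \<in> sem K V (FGamma \<phi> \<psi>)"
      if R': "simplicial_bisim K V R'" "(x', y') \<in> R'" "x' \<in> sem K V (FGamma \<phi> \<psi>)" for R' x' y'
    proof -
      have "\<exists>\<pi>y. simplicial_path K \<pi>y \<and> \<pi>y 0 = y' \<and> (\<forall>t\<in>{0..1}.
          (\<pi>x t \<in> sem K V \<phi> \<longleftrightarrow> \<pi>y t \<in> sem K V \<phi>) \<and> (\<pi>x t \<in> sem K V \<psi> \<longleftrightarrow> \<pi>y t \<in> sem K V \<psi>))"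
        if \<pi>x: "simplicial_path K \<pi>x" "\<pi>x 0 = x'" for \<pi>x
      proof -
        obtain \<pi>y where "simplicial_path K \<pi>y" "\<pi>y 0 = y'" "\<forall>t\<in>{0..1}. (\<pi>x t, \<pi>y t) \<in> R'"
          using simplicial_bisimD(4)[OF R'(1,2) \<pi>x] unfolding path_rel_def by blast
        then show ?thesis
          using FGamma.IH(1)[OF R'(1)] FGamma.IH(2)[OF R'(1)] by blast
      qed
      then show ?thesis
        using sem_gamma_transfer[OF K cell_invariant_sem[OF M] R'(3)]
          simplicial_bisimD(2)[OF R'(1,2)] by simp
    qed
    have "(y, x) \<in> R\<inverse>"
      using FGamma.prems(2) by simp
    then show ?case
      using one_way[OF FGamma.prems] one_way[OF simplicial_bisim_converse[OF FGamma.prems(1)]] by blast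
  qed
qed

lemma simplicial_bisim_subset_logeq:
  assumes M: "polyhedral_model K V" and R: "simplicial_bisim K V R"
  shows "R \<subseteq> logeq K V"
  using simplicial_bisimD(1,2)[OF R] simplicial_bisim_preserves_sem[OF M R]
  unfolding logeq_def by auto

section \<open>Logical equivalence is a simplicial bisimulation\<close>

lemma logeqD: "(x, y) \<in> logeq K V \<Longrightarrow> x \<in> polyhedron K \<and> y \<in> polyhedron K"
  unfolding logeq_def by auto

lemma logeq_refl: "x \<in> polyhedron K \<Longrightarrow> (x, x) \<in> logeq K V"
  unfolding logeq_def by auto

lemma logeq_sym: "(x, y) \<in> logeq K V \<Longrightarrow> (y, x) \<in> logeq K V"
  unfolding logeq_def by auto

lemma logeq_trans: "(x, y) \<in> logeq K V \<Longrightarrow> (y, z) \<in> logeq K V \<Longrightarrow> (x, z) \<in> logeq K V"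
  unfolding logeq_def by auto

lemma logeq_rel_interior:
  assumes M: "polyhedral_model K V" and "\<sigma> \<in> K" "p \<in> rel_interior \<sigma>" "q \<in> rel_interior \<sigma>"
  shows "(p, q) \<in> logeq K V"
  using cell_invariantD[OF cell_invariant_sem[OF M] assms(2)] assms(3,4)
    rel_interior_subset_polyhedron[OF assms(2)]
  unfolding logeq_def by blast

lemma sem_foldr_FAnd:
  "sem K V (foldr FAnd \<phi>s FTop) = polyhedron K \<inter> (\<Inter>\<phi>\<in>set \<phi>s. sem K V \<phi>)"
  by (induction \<phi>s) (use sem_subset_polyhedron in auto)

text \<open>There are finitely many cells and each formula is a union of cells, so the class of z is
  cut out by one formula separating z from each cell that leaves the class.\<close>

lemma logeq_class_definable:
  assumes M: "polyhedral_model K V" and z: "z \<in> polyhedron K"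
  obtains \<theta> where "sem K V \<theta> = {w. (w, z) \<in> logeq K V}"
proof -
  have K: "simplicial_complex K"
    using M unfolding polyhedral_model_def by blast
  define E where "E = {w. (w, z) \<in> logeq K V}"
  define B where "B = {C \<in> cells K. \<not> C \<subseteq> E}"
  have "\<forall>C\<in>B. \<exists>\<phi>. z \<in> sem K V \<phi> \<and> C \<inter> sem K V \<phi> = {}"
  proof
    fix C assume C: "C \<in> B"
    then obtain \<sigma> where \<sigma>: "\<sigma> \<in> K" "C = rel_interior \<sigma>"
      using cellsE[OF K] unfolding B_def by blast
    obtain w where w: "w \<in> C" "(w, z) \<notin> logeq K V"
      using C unfolding B_def E_def by blast
    then obtain \<phi> where \<phi>: "w \<in> sem K V \<phi> \<longleftrightarrow> z \<notin> sem K V \<phi>"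
      using z \<sigma>(2) rel_interior_subset_polyhedron[OF \<sigma>(1)] unfolding logeq_def by blast
    have "\<exists>\<phi>'. z \<in> sem K V \<phi>' \<and> w \<notin> sem K V \<phi>'"
    proof (cases "z \<in> sem K V \<phi>")
      case True
      then show ?thesis
        using \<phi> by blast
    next
      case False
      then show ?thesis
        using \<phi> z by (intro exI[of _ "FNeg \<phi>"]) auto
    qed
    then show "\<exists>\<phi>. z \<in> sem K V \<phi> \<and> C \<inter> sem K V \<phi> = {}"
      using cell_invariantD[OF cell_invariant_sem[OF M] \<sigma>(1)] w(1) \<sigma>(2) by blast
  qed
  then obtain f where f: "\<forall>C\<in>B. z \<in> sem K V (f C) \<and> C \<inter> sem K V (f C) = {}"
    by (rule bchoice[THEN exE])
  have "finite (cells K)"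
    using K by (simp add: cells_eq simplicial_complex_def)
  moreover have "B \<subseteq> cells K"
    unfolding B_def by blast
  ultimately have "finite B"
    using finite_subset by blast
  then obtain Cs where Cs: "set Cs = B"
    using finite_list by blast
  have "sem K V (foldr FAnd (map f Cs) FTop) = E"
  proof
    show "sem K V (foldr FAnd (map f Cs) FTop) \<subseteq> E"
    proof
      fix w assume "w \<in> sem K V (foldr FAnd (map f Cs) FTop)"
      then have w: "w \<in> polyhedron K" "\<forall>C\<in>B. w \<in> sem K V (f C)"
        using Cs by (auto simp: sem_foldr_FAnd)
      obtain \<sigma> where \<sigma>: "\<sigma> \<in> K" "w \<in> rel_interior \<sigma>"
        using polyhedron_in_cells[OF K w(1)] by blast
      then have "rel_interior \<sigma> \<notin> B"
        using w(2) f by blast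
      then show "w \<in> E"
        using rel_interior_in_cells[OF K \<sigma>] \<sigma>(2) unfolding B_def by blast
    qed
    show "E \<subseteq> sem K V (foldr FAnd (map f Cs) FTop)"
    proof
      fix w assume "w \<in> E"
      then have "w \<in> polyhedron K" "\<forall>\<phi>. w \<in> sem K V \<phi> \<longleftrightarrow> z \<in> sem K V \<phi>"
        unfolding E_def logeq_def by auto
      then show "w \<in> sem K V (foldr FAnd (map f Cs) FTop)"
        using f Cs by (auto simp: sem_foldr_FAnd)
    qed
  qed
  then show ?thesis
    using that unfolding E_def by blast
qed

text \<open>A path whose interior runs through one cell satisfies Gamma(theta1, theta2), where theta1 and
  theta2 define the classes of that cell and of the endpoint; a path witnessing this formula at y,
  made simplicial, matches the given one.\<close>

lemma logeq_match_cell_path: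
  assumes M: "polyhedral_model K V" and \<rho>: "path_in (polyhedron K) \<rho>" "\<rho> ` {0<..<1} \<subseteq> c"
    and c: "c \<in> cells K" and xy: "(\<rho> 0, y) \<in> logeq K V"
  obtains \<pi> where "simplicial_path K \<pi>" "\<pi> 0 = y" "path_rel (logeq K V) \<rho> \<pi>"
proof -
  have K: "simplicial_complex K"
    using M unfolding polyhedral_model_def by blast
  obtain \<sigma> where \<sigma>: "\<sigma> \<in> K" "c = rel_interior \<sigma>"
    using cellsE[OF K c] by blast
  have mid: "(\<rho> t, \<rho> (1/2)) \<in> logeq K V" if "t \<in> {0<..<1}" for t
  proof -
    have "\<rho> t \<in> rel_interior \<sigma>" "\<rho> (1/2) \<in> rel_interior \<sigma>"
      using \<rho>(2) \<sigma>(2) that by auto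
    then show ?thesis
      by (rule logeq_rel_interior[OF M \<sigma>(1)])
  qed
  have in_P: "\<rho> (1/2) \<in> polyhedron K" "\<rho> 1 \<in> polyhedron K"
    using path_in_mem[OF \<rho>(1)] by auto
  obtain \<theta>1 where \<theta>1: "sem K V \<theta>1 = {w. (w, \<rho> (1/2)) \<in> logeq K V}"
    using logeq_class_definable[OF M in_P(1)] by blast
  obtain \<theta>2 where \<theta>2: "sem K V \<theta>2 = {w. (w, \<rho> 1) \<in> logeq K V}"
    using logeq_class_definable[OF M in_P(2)] by blast
  have "\<rho> ` {0<..<1} \<subseteq> sem K V \<theta>1"
    using mid \<theta>1 by auto
  moreover have "\<rho> 1 \<in> sem K V \<theta>2"
    using \<theta>2 logeq_refl[OF in_P(2)] by simp
  ultimately have "path_in (polyhedron K) \<rho> \<and> \<rho> 0 = \<rho> 0 \<and> \<rho> ` {0<..<1} \<subseteq> sem K V \<theta>1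
      \<and> \<rho> 1 \<in> sem K V \<theta>2"
    using \<rho>(1) by blast
  moreover have "\<rho> 0 \<in> polyhedron K"
    using xy logeqD by blast
  ultimately have "\<rho> 0 \<in> sem K V (FGamma \<theta>1 \<theta>2)"
    unfolding sem.simps by blast
  then have "y \<in> sem K V (FGamma \<theta>1 \<theta>2)"
    using xy unfolding logeq_def by blast
  then obtain \<pi> where \<pi>: "path_in (polyhedron K) \<pi>" "\<pi> 0 = y" "\<pi> ` {0<..<1} \<subseteq> sem K V \<theta>1"
    "\<pi> 1 \<in> sem K V \<theta>2"
    by auto
  obtain \<pi>' where \<pi>': "simplicial_path K \<pi>'" "\<pi>' 0 = y" "\<pi>' 1 = \<pi> 1" "\<pi>' ` {0<..<1} \<subseteq> sem K V \<theta>1"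
    using simplicial_link_of_path[OF K cell_invariant_sem[OF M] \<pi>(1,3)] \<pi>(2)
    unfolding simplicial_link_def by auto
  have "path_rel (logeq K V) \<rho> \<pi>'"
    unfolding path_rel_def
  proof
    fix t :: real assume "t \<in> {0..1}"
    then consider "t = 0" | "t \<in> {0<..<1}" | "t = 1"
      by fastforce
    then show "(\<rho> t, \<pi>' t) \<in> logeq K V"
    proof cases
      case 1
      then show ?thesis
        using xy \<pi>'(2) by simp
    next
      case 2
      then have "(\<pi>' t, \<rho> (1/2)) \<in> logeq K V"
        using \<pi>'(4) \<theta>1 by blast
      then show ?thesis
        using mid[OF 2] logeq_sym logeq_trans by metis
    next
      case 3
      then show ?thesis
        using \<pi>(4) \<pi>'(3) \<theta>2 logeq_sym by auto
    qed
  qed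
  then show ?thesis
    using that \<pi>'(1,2) by blast
qed

lemma logeq_match_subdivided_path:
  assumes M: "polyhedral_model K V"
  shows "cell_subdivision K \<pi> k s c \<Longrightarrow> path_in (polyhedron K) \<pi> \<Longrightarrow> (\<pi> 0, y) \<in> logeq K V \<Longrightarrow>
    \<exists>\<pi>'. simplicial_path K \<pi>' \<and> \<pi>' 0 = y \<and> path_rel (logeq K V) \<pi> \<pi>'"
proof (induction k arbitrary: \<pi> y s c)
  case 0
  then show ?case
    by (simp add: cell_subdivision_def)
next
  case (Suc k)
  have s: "s 0 = 0" "s (Suc k) = 1" "\<forall>i<Suc k. s i < s (Suc i)"
    and pieces: "\<forall>i\<in>{1..Suc k}. c i \<in> cells K \<and> \<pi> ` {s (i - 1)<..<s i} \<subseteq> c i"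
    using Suc.prems(1) unfolding cell_subdivision_def by auto
  have c1: "c 1 \<in> cells K" "\<pi> ` {s 0<..<s 1} \<subseteq> c 1"
    using bspec[OF pieces, of 1] by simp_all
  show ?case
  proof (cases "k = 0")
    case True
    then obtain \<pi>' where "simplicial_path K \<pi>'" "\<pi>' 0 = y" "path_rel (logeq K V) \<pi> \<pi>'"
      using logeq_match_cell_path[OF M Suc.prems(2) _ c1(1) Suc.prems(3)] c1(2) s by auto
    then show ?thesis
      by blast
  next
    case False
    have s1: "0 < s 1" "s 1 < 1"
      using s chain_less[OF s(3), of 1 "Suc k"] False by auto
    have subpaths: "path_in (polyhedron K) (subpath 0 (s 1) \<pi>)"
        "path_in (polyhedron K) (subpath (s 1) 1 \<pi>)"
      using path_in_subpath[OF Suc.prems(2)] s1 by auto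
    have "subpath 0 (s 1) \<pi> ` {0<..<1} \<subseteq> c 1"
      using c1(2) s(1) s1(1) by (simp add: subpath_image_open_interval)
    moreover have "(subpath 0 (s 1) \<pi> 0, y) \<in> logeq K V"
      using Suc.prems(3) by (simp add: subpath_def)
    ultimately obtain \<pi>1 where \<pi>1: "simplicial_path K \<pi>1" "\<pi>1 0 = y"
        "path_rel (logeq K V) (subpath 0 (s 1) \<pi>) \<pi>1"
      using logeq_match_cell_path[OF M subpaths(1) _ c1(1)] by blast
    have "(subpath (s 1) 1 \<pi> 0, \<pi>1 1) \<in> logeq K V"
      using bspec[OF \<pi>1(3)[unfolded path_rel_def], of 1] by (simp add: subpath_def)
    then obtain \<pi>2 where \<pi>2: "simplicial_path K \<pi>2" "\<pi>2 0 = \<pi>1 1"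
        "path_rel (logeq K V) (subpath (s 1) 1 \<pi>) \<pi>2"
      using Suc.IH[OF cell_subdivision_suffix[OF Suc.prems(1)] subpaths(2)] False by auto
    have "path_rel (logeq K V) (join_at (s 1) (subpath 0 (s 1) \<pi>) (subpath (s 1) 1 \<pi>))
        (join_at (s 1) \<pi>1 \<pi>2)"
      using path_rel_join_at[OF \<pi>1(3) \<pi>2(3) s1] .
    then have "path_rel (logeq K V) \<pi> (join_at (s 1) \<pi>1 \<pi>2)"
      by (simp only: join_at_subpaths[OF s1])
    moreover have "simplicial_path K (join_at (s 1) \<pi>1 \<pi>2)"
      using simplicial_path_join_at[OF \<pi>1(1) \<pi>2(1) \<pi>2(2)[symmetric] s1] .
    ultimately show ?thesis
      using \<pi>1(2) s1 by (intro exI[of _ "join_at (s 1) \<pi>1 \<pi>2"]) auto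
  qed
qed

lemma logeq_simplicial_bisim:
  assumes M: "polyhedral_model K V"
  shows "simplicial_bisim K V (logeq K V)"
proof -
  have match: "\<exists>\<pi>'. simplicial_path K \<pi>' \<and> \<pi>' 0 = y \<and> path_rel (logeq K V) \<pi> \<pi>'"
    if "simplicial_path K \<pi>" "(\<pi> 0, y) \<in> logeq K V" for \<pi> y
    using logeq_match_subdivided_path[OF M] that unfolding simplicial_path_iff_subdivision by blast
  have pair: "(\<forall>p. x \<in> V p \<longleftrightarrow> y \<in> V p)
      \<and> (\<forall>\<pi>x. simplicial_path K \<pi>x \<and> \<pi>x 0 = x \<longrightarrow>
          (\<exists>\<pi>y. simplicial_path K \<pi>y \<and> \<pi>y 0 = y \<and> path_rel (logeq K V) \<pi>x \<pi>y))
      \<and> (\<forall>\<pi>y. simplicial_path K \<pi>y \<and> \<pi>y 0 = y \<longrightarrow>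
          (\<exists>\<pi>x. simplicial_path K \<pi>x \<and> \<pi>x 0 = x \<and> path_rel (logeq K V) \<pi>x \<pi>y))"
    if xy: "(x, y) \<in> logeq K V" for x y
  proof (intro conjI allI impI)
    fix p
    have "x \<in> sem K V (FAtom p) \<longleftrightarrow> y \<in> sem K V (FAtom p)"
      using xy unfolding logeq_def by blast
    then show "x \<in> V p \<longleftrightarrow> y \<in> V p"
      using logeqD[OF xy] by simp
  next
    fix \<pi>x assume "simplicial_path K \<pi>x \<and> \<pi>x 0 = x"
    then show "\<exists>\<pi>y. simplicial_path K \<pi>y \<and> \<pi>y 0 = y \<and> path_rel (logeq K V) \<pi>x \<pi>y"
      using match[of \<pi>x y] xy by auto
  next
    fix \<pi>y assume "simplicial_path K \<pi>y \<and> \<pi>y 0 = y"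
    then obtain \<pi>x where "simplicial_path K \<pi>x" "\<pi>x 0 = x" "path_rel (logeq K V) \<pi>y \<pi>x"
      using match[of \<pi>y x] logeq_sym[OF xy] by auto
    moreover have "path_rel (logeq K V) \<pi>x \<pi>y"
      using \<open>path_rel (logeq K V) \<pi>y \<pi>x\<close> logeq_sym unfolding path_rel_def by blast
    ultimately show "\<exists>\<pi>x. simplicial_path K \<pi>x \<and> \<pi>x 0 = x \<and> path_rel (logeq K V) \<pi>x \<pi>y"
      by blast
  qed
  show ?thesis
    unfolding simplicial_bisim_def using pair logeqD by fast
qed

theorem mainTheorem15:
  fixes K :: "'a::euclidean_space set set" and V :: "'p::finite \<Rightarrow> 'a set"
  assumes "polyhedral_model K V"
  shows "\<exists>R. simplicial_bisim K V R \<and> (\<forall>R'. simplicial_bisim K V R' \<longrightarrow> R' \<subseteq> R)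
           \<and> R = logeq K V"
  using logeq_simplicial_bisim[OF assms] simplicial_bisim_subset_logeq[OF assms] by blast

end
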